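(* Let $K_n=(V,E)$ be the complete graph and let $M_1,M_2$ be matchings in $K_n$ with $M_1\not\subseteq M_2$ and $M_2\not\subseteq M_1$. Then either the graph $(V,M_1\triangle M_2)$ has at most two (possibly trivial) connected components, or $\bm{c}=\chi(M_1)-\chi(M_2)$ is a circuit of the Matching polytope $P_{\mathrm{match}}(n)=\operatorname{conv}\{\chi(M): M\text{ a matching in }K_n\}$, with circuits taken with respect to the linear description $$\bm{x}(E[S])\le (|S|-1)/2 \ \text{for all } S\subseteq V,\ |S| \text{ odd},\ |S|\ge 3;\quad \bm{x}(\delta(v))\le 1\ \text{for all } v\in V;\quad \bm{x}\ge \bm{0}.$$
   Context: $\chi(M)\in\{0,1\}^E$ is the characteristic vector of $M$; $\triangle$ is symmetric difference; a trivial component is a single node; $E[S]$ is the set of edges with both endpoints in $S$, $\delta(v)$ the set of edges incident to $v$, $\bm{x}(F)=\sum_{e\in F}x_e$. Circuits: for a polytope $P=\{\bm{x}: B\bm{x}\le \bm{d}\}$ given by a fixed linear system, a nonzero vector $\bm{g}$ is a circuit of $P$ if $\operatorname{supp}(B\bm{g})$ is inclusion-minimal among the sets $\operatorname{supp}(B\bm{y})$ with $\bm{y}\neq\bm{0}$. *)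

theory Defs
  imports Complex_Main
begin

definition Vn :: "nat \<Rightarrow> nat set" where
  "Vn n = {0..<n}"

definition En :: "nat \<Rightarrow> nat set set" where
  "En n = {e. e \<subseteq> Vn n \<and> card e = 2}"

definition is_matching :: "nat \<Rightarrow> nat set set \<Rightarrow> bool" where
  "is_matching n M \<longleftrightarrow> M \<subseteq> En n \<and> (\<forall>e\<in>M. \<forall>f\<in>M. e \<noteq> f \<longrightarrow> e \<inter> f = {})"

definition chi :: "nat set set \<Rightarrow> nat set \<Rightarrow> real" where
  "chi M e = (if e \<in> M then 1 else 0)"

definition edges_in :: "nat \<Rightarrow> nat set \<Rightarrow> nat set set" where
  "edges_in n S = {e \<in> En n. e \<subseteq> S}"

definition delta :: "nat \<Rightarrow> nat \<Rightarrow> nat set set" where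
  "delta n v = {e \<in> En n. v \<in> e}"

text \<open>Rows of the linear system B x <= d describing the matching polytope.\<close>
datatype row = OddSet "nat set" | Degree nat | NonNeg "nat set"

definition valid_row :: "nat \<Rightarrow> row \<Rightarrow> bool" where
  "valid_row n r = (case r of
      OddSet S \<Rightarrow> S \<subseteq> Vn n \<and> odd (card S) \<and> card S \<ge> 3
    | Degree v \<Rightarrow> v \<in> Vn n
    | NonNeg e \<Rightarrow> e \<in> En n)"

text \<open>(B y)_r; the nonnegativity constraint x_e >= 0 is the row -x_e <= 0.\<close>
definition row_val :: "nat \<Rightarrow> row \<Rightarrow> (nat set \<Rightarrow> real) \<Rightarrow> real" where
  "row_val n r y = (case r of
      OddSet S \<Rightarrow> sum y (edges_in n S)
    | Degree v \<Rightarrow> sum y (delta n v)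
    | NonNeg e \<Rightarrow> - y e)"

definition supp_B :: "nat \<Rightarrow> (nat set \<Rightarrow> real) \<Rightarrow> row set" where
  "supp_B n y = {r. valid_row n r \<and> row_val n r y \<noteq> 0}"

text \<open>Vectors in R^E are functions on edge sets; only values on En n matter.
  A vector is nonzero iff it is nonzero at some edge of K_n.\<close>
definition nonzero_vec :: "nat \<Rightarrow> (nat set \<Rightarrow> real) \<Rightarrow> bool" where
  "nonzero_vec n y \<longleftrightarrow> (\<exists>e\<in>En n. y e \<noteq> 0)"

definition is_circuit_match :: "nat \<Rightarrow> (nat set \<Rightarrow> real) \<Rightarrow> bool" where
  "is_circuit_match n g \<longleftrightarrow> nonzero_vec n g \<and>
     (\<forall>y. nonzero_vec n y \<longrightarrow> \<not> (supp_B n y \<subset> supp_B n g))"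

definition conn_rel :: "nat set \<Rightarrow> nat set set \<Rightarrow> (nat \<times> nat) set" where
  "conn_rel V F = {(u, v). u \<in> V \<and> v \<in> V \<and> (\<lambda>a b. {a, b} \<in> F)\<^sup>*\<^sup>* u v}"

definition components :: "nat set \<Rightarrow> nat set set \<Rightarrow> nat set set" where
  "components V F = V // conn_rel V F"

end

theory Submission
  imports Defs
begin

text \<open>Suppose the symmetric difference \<open>D\<close> of the two matchings has at least three components
  and let \<open>y \<noteq> 0\<close> have \<open>supp(By) \<subseteq> supp(Bc)\<close>. The nonnegativity rows force \<open>y\<close> to vanish off
  \<open>D\<close>. For \<open>e \<in> M\<^sub>1 - M\<^sub>2\<close> and \<open>f \<in> M\<^sub>2 - M\<^sub>1\<close> there is an odd set \<open>S\<close> containing \<open>e \<union> f\<close> whose only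
  \<open>D\<close>-edges are \<open>e\<close> and \<open>f\<close>: \<open>e \<union> f\<close> itself if the edges meet, otherwise \<open>e \<union> f\<close> plus a vertex
  not adjacent to it in \<open>D\<close>, which exists because a third component is available. The row of
  \<open>S\<close> vanishes on \<open>c\<close>, hence on \<open>y\<close>, so \<open>y e = - y f\<close>. Thus \<open>y\<close> is a nonzero multiple of \<open>c\<close>
  and has the same support.\<close>

lemma card_2_subset_eq: "card e = 2 \<Longrightarrow> card f = 2 \<Longrightarrow> e \<subseteq> f \<Longrightarrow> e = f"
  by (metis card_subset_eq card.infinite zero_neq_numeral)

lemma card_Un_meeting_2_sets:
  assumes "card e = 2" "card f = 2" "e \<noteq> f" "e \<inter> f \<noteq> {}"
  shows "card (e \<union> f) = 3"
proof -
  have fin: "finite e" "finite f" using assms(1,2) by (auto intro: card_ge_0_finite)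
  have "card (e \<inter> f) \<le> 2" using assms(1) fin by (metis card_mono inf_le1)
  moreover have "card (e \<inter> f) \<noteq> 2"
  proof
    assume "card (e \<inter> f) = 2"
    then have "e \<inter> f = e" using card_2_subset_eq assms(1) by blast
    then show False using card_2_subset_eq assms(1-3) by blast
  qed
  moreover have "card (e \<inter> f) \<noteq> 0" using assms(4) fin by simp
  ultimately have "card (e \<inter> f) = 1" by linarith
  then show ?thesis using card_Un_Int[OF fin] assms(1,2) by simp
qed

lemma finite_En: "finite (En n)"
  by (rule finite_subset[of _ "Pow (Vn n)"]) (auto simp: En_def Vn_def)

lemma finite_edges_in: "finite (edges_in n S)"
  by (rule finite_subset[OF _ finite_En]) (auto simp: edges_in_def)

lemma matching_card_edge: "is_matching n M \<Longrightarrow> e \<in> M \<Longrightarrow> card e = 2"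
  by (auto simp: is_matching_def En_def)

lemma matching_disjoint: "is_matching n M \<Longrightarrow> e \<in> M \<Longrightarrow> g \<in> M \<Longrightarrow> g \<noteq> e \<Longrightarrow> g \<inter> e = {}"
  by (auto simp: is_matching_def)

lemma symdiff_edge_subset_Un_cases:
  assumes m1: "is_matching n M1" and m2: "is_matching n M2"
    and e: "e \<in> M1 - M2" and f: "f \<in> M2 - M1"
    and g: "g \<in> sym_diff M1 M2" and sub: "g \<subseteq> e \<union> f"
  shows "g = e \<or> g = f"
proof (rule ccontr)
  assume ne: "\<not> (g = e \<or> g = f)"
  consider "g \<in> M1" | "g \<in> M2 - M1" using g by blast
  then show False
  proof cases
    case 1
    then have "g \<subseteq> f" using matching_disjoint[OF m1 _ 1] e ne sub by blast
    then show False
      using card_2_subset_eq matching_card_edge m1 m2 1 e f ne by blast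
  next
    case 2
    then have "g \<subseteq> e" using matching_disjoint[OF m2 _] f ne sub by blast
    then show False
      using card_2_subset_eq matching_card_edge m1 m2 2 e f ne by blast
  qed
qed

lemma symp_edge_rel: "symp (\<lambda>a b. {a, b} \<in> F)"
  by (auto intro: sympI simp: insert_commute)

lemma equiv_conn_rel: "equiv V (conn_rel V F)"
  using sympD[OF symp_rtranclp[OF symp_edge_rel]]
  unfolding equiv_def refl_on_def sym_def trans_def conn_rel_def
  by (auto intro: rtranclp_trans)

lemma rtranclp_edge_rel_edge:
  assumes "g \<in> F" "card g = 2" "x \<in> g" "z \<in> g"
  shows "(\<lambda>a b. {a, b} \<in> F)\<^sup>*\<^sup>* x z"
proof (cases "x = z")
  case False
  then have "g = {x, z}" using assms(2-4) by (auto simp: card_2_iff)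
  then show ?thesis using assms(1) by (intro r_into_rtranclp) simp
qed simp

lemma card_components_le_2:
  assumes "a \<in> V" "c \<in> V"
    and "\<forall>w\<in>V. (w, a) \<in> conn_rel V F \<or> (w, c) \<in> conn_rel V F"
  shows "card (components V F) \<le> 2"
proof -
  let ?R = "conn_rel V F"
  have "components V F \<subseteq> {?R``{a}, ?R``{c}}"
  proof
    fix X assume "X \<in> components V F"
    then obtain w where "w \<in> V" "X = ?R``{w}" unfolding components_def by (auto elim: quotientE)
    then show "X \<in> {?R``{a}, ?R``{c}}" using assms(3) equiv_class_eq[OF equiv_conn_rel] by blast
  qed
  then have "card (components V F) \<le> card {?R``{a}, ?R``{c}}" by (intro card_mono) simp_all
  also have "\<dots> \<le> 2" by (cases "?R``{a} = ?R``{c}") auto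
  finally show ?thesis .
qed

lemma exists_vertex_nonadjacent_to_two_edges:
  assumes edges: "\<forall>g\<in>F. card g = 2"
    and e: "e \<in> F" "e \<subseteq> V" and f: "f \<in> F" "f \<subseteq> V"
    and many: "\<not> card (components V F) \<le> 2"
  shows "\<exists>w\<in>V - (e \<union> f). \<forall>g\<in>F. w \<in> g \<longrightarrow> g \<inter> (e \<union> f) = {}"
proof (rule ccontr)
  let ?R = "(\<lambda>a b. {a, b} \<in> F)\<^sup>*\<^sup>*"
  assume adj: "\<not> ?thesis"
  obtain a c where a: "a \<in> e" and c: "c \<in> f"
    using edges e(1) f(1) by (metis card_2_iff insertI1)
  have "?R x a" if "x \<in> e" for x
    using rtranclp_edge_rel_edge[OF e(1) _ that a] edges e(1) by simp
  moreover have "?R x c" if "x \<in> f" for x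
    using rtranclp_edge_rel_edge[OF f(1) _ that c] edges f(1) by simp
  ultimately have to_ac: "?R x a \<or> ?R x c" if "x \<in> e \<union> f" for x
    using that by blast
  have "?R w a \<or> ?R w c" if w: "w \<in> V" for w
  proof (cases "w \<in> e \<union> f")
    case False
    then obtain g x where g: "g \<in> F" "w \<in> g" "x \<in> g" "x \<in> e \<union> f" using adj w by blast
    then have "?R w x" using rtranclp_edge_rel_edge[OF g(1) _ g(2,3)] edges by simp
    then show ?thesis using to_ac[OF g(4)] by (meson rtranclp_trans)
  qed (rule to_ac)
  then have "card (components V F) \<le> 2"
    using a c e f by (intro card_components_le_2[of a V c]) (auto simp: conn_rel_def)
  then show False using many by contradiction
qed

lemma odd_set_isolating_symdiff_edges:
  assumes m1: "is_matching n M1" and m2: "is_matching n M2"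
    and e: "e \<in> M1 - M2" and f: "f \<in> M2 - M1"
    and many: "\<not> card (components (Vn n) (sym_diff M1 M2)) \<le> 2"
  obtains S where "S \<subseteq> Vn n" "odd (card S)" "card S \<ge> 3" "e \<union> f \<subseteq> S"
    "\<forall>g\<in>sym_diff M1 M2. g \<subseteq> S \<longrightarrow> g \<subseteq> e \<union> f"
proof -
  let ?D = "sym_diff M1 M2"
  have DE: "?D \<subseteq> En n" using m1 m2 by (auto simp: is_matching_def)
  then have D2: "\<forall>g\<in>?D. card g = 2" by (auto simp: En_def)
  have ce: "card e = 2" and cf: "card f = 2" using D2 e f by blast+
  have fin: "finite e" "finite f" using ce cf by (auto intro: card_ge_0_finite)
  have eV: "e \<subseteq> Vn n" and fV: "f \<subseteq> Vn n" using e f DE by (auto simp: En_def)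
  show thesis
  proof (cases "e \<inter> f = {}")
    case False
    have "e \<noteq> f" using e f by blast
    then have "card (e \<union> f) = 3" using card_Un_meeting_2_sets[OF ce cf _ False] by blast
    then show thesis using that[of "e \<union> f"] eV fV by simp
  next
    case True
    obtain w where w: "w \<in> Vn n - (e \<union> f)" "\<forall>g\<in>?D. w \<in> g \<longrightarrow> g \<inter> (e \<union> f) = {}"
      using exists_vertex_nonadjacent_to_two_edges[OF D2 _ eV _ fV many] e f by blast
    have card5: "card (insert w (e \<union> f)) = 5"
      using card_Un_disjoint[OF fin True] ce cf w(1) fin by simp
    have isolated: "g \<subseteq> e \<union> f" if "g \<in> ?D" "g \<subseteq> insert w (e \<union> f)" for g
    proof (rule ccontr)
      assume "\<not> g \<subseteq> e \<union> f"
      then have "g \<subseteq> {w}" using that w(2) by blast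
      then have "card g \<le> 1" using card_mono[of "{w}" g] by simp
      then show False using that(1) D2 by simp
    qed
    show thesis
    proof (rule that[of "insert w (e \<union> f)"])
      show "insert w (e \<union> f) \<subseteq> Vn n" using eV fV w(1) by blast
      show "odd (card (insert w (e \<union> f)))" "card (insert w (e \<union> f)) \<ge> 3"
        by (simp_all add: card5)
      show "\<forall>g\<in>?D. g \<subseteq> insert w (e \<union> f) \<longrightarrow> g \<subseteq> e \<union> f" using isolated by blast
    qed blast
  qed
qed

lemma row_val_OddSet_two_edges:
  assumes "e \<in> edges_in n S" "f \<in> edges_in n S" "e \<noteq> f"
    and "\<forall>g\<in>edges_in n S - {e, f}. y g = 0"
  shows "row_val n (OddSet S) y = y e + y f"
proof -
  have "sum y (edges_in n S) = sum y {e, f}"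
    using assms finite_edges_in by (intro sum.mono_neutral_right) auto
  then show ?thesis using assms(3) by (simp add: row_val_def)
qed

lemma supp_B_subset_vanishes:
  assumes "supp_B n y \<subseteq> supp_B n g" "e \<in> En n" "g e = 0"
  shows "y e = 0"
proof (rule ccontr)
  assume "y e \<noteq> 0"
  then have "NonNeg e \<in> supp_B n y" using assms(2) by (simp add: supp_B_def valid_row_def row_val_def)
  then have "NonNeg e \<in> supp_B n g" using assms(1) by blast
  then show False using assms(3) by (simp add: supp_B_def row_val_def)
qed

lemma supp_B_scaled:
  assumes "\<forall>e\<in>En n. y e = l * g e" "l \<noteq> 0"
  shows "supp_B n y = supp_B n g"
proof -
  have "row_val n r y = l * row_val n r g" if "valid_row n r" for r
    using that assms(1)
    by (cases r) (auto simp: row_val_def valid_row_def edges_in_def delta_def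
        sum_distrib_left intro!: sum.cong)
  then show ?thesis using assms(2) by (auto simp: supp_B_def)
qed

lemma symdiff_pair_sum_zero:
  assumes m1: "is_matching n M1" and m2: "is_matching n M2"
    and e: "e \<in> M1 - M2" and f: "f \<in> M2 - M1"
    and many: "\<not> card (components (Vn n) (sym_diff M1 M2)) \<le> 2"
    and supp: "supp_B n y \<subseteq> supp_B n (\<lambda>e. chi M1 e - chi M2 e)"
  shows "y e + y f = 0"
proof -
  let ?D = "sym_diff M1 M2"
  let ?c = "\<lambda>e. chi M1 e - chi M2 e"
  obtain S where S: "S \<subseteq> Vn n" "odd (card S)" "card S \<ge> 3" "e \<union> f \<subseteq> S"
    and isolated: "\<forall>g\<in>?D. g \<subseteq> S \<longrightarrow> g \<subseteq> e \<union> f"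
    using odd_set_isolating_symdiff_edges[OF m1 m2 e f many] .
  have ef: "e \<in> edges_in n S" "f \<in> edges_in n S" "e \<noteq> f"
    using e f S(4) m1 m2 by (auto simp: edges_in_def is_matching_def)
  have off_D: "g \<notin> ?D" if g: "g \<in> edges_in n S - {e, f}" for g
  proof
    assume "g \<in> ?D"
    moreover have "g \<subseteq> S" using g by (simp add: edges_in_def)
    ultimately have "g = e \<or> g = f"
      using isolated symdiff_edge_subset_Un_cases[OF m1 m2 e f, of g] by simp
    then show False using g by blast
  qed
  have c_off: "\<forall>g\<in>edges_in n S - {e, f}. ?c g = 0"
    using off_D by (auto simp: chi_def)
  have y_off: "\<forall>g\<in>edges_in n S - {e, f}. y g = 0"
    using c_off supp_B_subset_vanishes[OF supp] by (auto simp: edges_in_def)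
  have "row_val n (OddSet S) ?c = 0"
    using row_val_OddSet_two_edges[OF ef c_off] e f by (simp add: chi_def)
  then have "OddSet S \<notin> supp_B n ?c"
    by (simp add: supp_B_def)
  then have "OddSet S \<notin> supp_B n y"
    using supp by blast
  then have "row_val n (OddSet S) y = 0"
    using S(1-3) by (simp add: supp_B_def valid_row_def)
  then show ?thesis
    using row_val_OddSet_two_edges[OF ef y_off] by simp
qed

lemma symdiff_supp_B_subset_proportional:
  assumes m1: "is_matching n M1" and m2: "is_matching n M2"
    and e0: "e0 \<in> M1 - M2" and f0: "f0 \<in> M2 - M1"
    and many: "\<not> card (components (Vn n) (sym_diff M1 M2)) \<le> 2"
    and supp: "supp_B n y \<subseteq> supp_B n (\<lambda>e. chi M1 e - chi M2 e)"
    and g: "g \<in> En n"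
  shows "y g = y e0 * (chi M1 g - chi M2 g)"
proof -
  note pair = symdiff_pair_sum_zero[OF m1 m2 _ _ many supp]
  consider "g \<in> M1 - M2" | "g \<in> M2 - M1" | "g \<notin> sym_diff M1 M2" by blast
  then show ?thesis
  proof cases
    case 1
    then show ?thesis using pair[OF 1 f0] pair[OF e0 f0] by (simp add: chi_def)
  next
    case 2
    then show ?thesis using pair[OF e0 2] by (simp add: chi_def)
  next
    case 3
    then show ?thesis using supp_B_subset_vanishes[OF supp g] by (simp add: chi_def)
  qed
qed

theorem lemma3:
  fixes n :: nat and M1 M2 :: "nat set set"
  assumes "is_matching n M1" and "is_matching n M2"
    and "\<not> M1 \<subseteq> M2" and "\<not> M2 \<subseteq> M1"
  shows "card (components (Vn n) ((M1 - M2) \<union> (M2 - M1))) \<le> 2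
         \<or> is_circuit_match n (\<lambda>e. chi M1 e - chi M2 e)"
proof (cases "card (components (Vn n) (sym_diff M1 M2)) \<le> 2")
  case many: False
  let ?c = "\<lambda>e. chi M1 e - chi M2 e"
  obtain e0 f0 where e0: "e0 \<in> M1 - M2" and f0: "f0 \<in> M2 - M1" using assms(3,4) by blast
  have "\<not> supp_B n y \<subset> supp_B n ?c" if "nonzero_vec n y" for y
  proof
    assume ss: "supp_B n y \<subset> supp_B n ?c"
    then have "\<forall>g\<in>En n. y g = y e0 * ?c g"
      using symdiff_supp_B_subset_proportional[OF assms(1,2) e0 f0 many] by blast
    moreover from this have "y e0 \<noteq> 0" using \<open>nonzero_vec n y\<close> by (auto simp: nonzero_vec_def)
    ultimately have "supp_B n y = supp_B n ?c" by (rule supp_B_scaled)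
    then show False using ss by simp
  qed
  moreover have "nonzero_vec n ?c"
    using e0 assms(1) by (auto simp: nonzero_vec_def is_matching_def chi_def)
  ultimately show ?thesis by (simp add: is_circuit_match_def)
qed simp

end
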